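(* Let $G$ be a twin-free graph with $G\ne K_1$ and $G\ne K_2$. Then for every $t\ge1$, $\det(\mu_t(G))=\det(G)$ if $G$ has no isolated vertex, and $\det(\mu_t(G))=\det(G)+t-1$ otherwise.
   Context: All graphs are finite and simple. For a graph $G$ with $V(G)=\{v_1,\dots,v_n\}$ and an integer $t\ge1$, the generalized Mycielskian $\mu_t(G)$ has vertex set $\{u_i^s: 1\le i\le n,\ 0\le s\le t\}\cup\{w\}$, where $u_i^0$ is identified with $v_i$. Its edges are: $u_i^0u_j^0$ for each edge $v_iv_j$ of $G$; $u_i^su_j^{s+1}$ and $u_j^su_i^{s+1}$ for each edge $v_iv_j$ of $G$ and each $0\le s<t$; and $u_i^tw$ for all $1\le i\le n$. A set $S\subseteq V(G)$ is a determining set for $G$ if the only automorphism of $G$ fixing every vertex of $S$ is the identity; $\det(G)$ is the minimum size of a determining set. Two vertices are twins if they have the same open neighborhood; $G$ is twin-free if it has no pair of distinct twin vertices. *)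

theory Defs
  imports Main
begin

definition simple_graph :: "'a set \<Rightarrow> ('a \<Rightarrow> 'a \<Rightarrow> bool) \<Rightarrow> bool" where
  "simple_graph V E \<longleftrightarrow> finite V \<and> (\<forall>x y. E x y \<longrightarrow> x \<in> V \<and> y \<in> V)
     \<and> (\<forall>x y. E x y \<longrightarrow> E y x) \<and> (\<forall>x. \<not> E x x)"

definition automorphism :: "'a set \<Rightarrow> ('a \<Rightarrow> 'a \<Rightarrow> bool) \<Rightarrow> ('a \<Rightarrow> 'a) \<Rightarrow> bool" where
  "automorphism V E f \<longleftrightarrow> bij_betw f V V \<and> (\<forall>x\<in>V. \<forall>y\<in>V. E x y \<longleftrightarrow> E (f x) (f y))"

definition determining_set :: "'a set \<Rightarrow> ('a \<Rightarrow> 'a \<Rightarrow> bool) \<Rightarrow> 'a set \<Rightarrow> bool" where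
  "determining_set V E S \<longleftrightarrow> S \<subseteq> V \<and>
     (\<forall>f. automorphism V E f \<and> (\<forall>x\<in>S. f x = x) \<longrightarrow> (\<forall>x\<in>V. f x = x))"

definition det_num :: "'a set \<Rightarrow> ('a \<Rightarrow> 'a \<Rightarrow> bool) \<Rightarrow> nat" where
  "det_num V E = (LEAST k. \<exists>S. determining_set V E S \<and> card S = k)"

definition twin_free :: "'a set \<Rightarrow> ('a \<Rightarrow> 'a \<Rightarrow> bool) \<Rightarrow> bool" where
  "twin_free V E \<longleftrightarrow> (\<forall>x\<in>V. \<forall>y\<in>V. {z. E x z} = {z. E y z} \<longrightarrow> x = y)"

definition has_isolated_vertex :: "'a set \<Rightarrow> ('a \<Rightarrow> 'a \<Rightarrow> bool) \<Rightarrow> bool" where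
  "has_isolated_vertex V E \<longleftrightarrow> (\<exists>v\<in>V. \<forall>u. \<not> E v u)"

text \<open>Generalized Mycielskian: vertex u_i^s is Some (v_i, s), the root w is None.\<close>
definition myc_V :: "'a set \<Rightarrow> nat \<Rightarrow> ('a \<times> nat) option set" where
  "myc_V V t = {Some (v, s) | v s. v \<in> V \<and> s \<le> t} \<union> {None}"

definition myc_E :: "'a set \<Rightarrow> ('a \<Rightarrow> 'a \<Rightarrow> bool) \<Rightarrow> nat
     \<Rightarrow> ('a \<times> nat) option \<Rightarrow> ('a \<times> nat) option \<Rightarrow> bool" where
  "myc_E V E t x y \<longleftrightarrow> x \<in> myc_V V t \<and> y \<in> myc_V V t \<and>
     (case (x, y) of
        (Some (a, s), Some (b, r)) \<Rightarrow>
          E a b \<and> ((s = 0 \<and> r = 0) \<or> r = s + 1 \<or> s = r + 1)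
      | (Some (a, s), None) \<Rightarrow> s = t
      | (None, Some (b, r)) \<Rightarrow> r = t
      | (None, None) \<Rightarrow> False)"

end

theory Submission
  imports Defs "HOL-Combinatorics.Transposition"
begin

(*
  An automorphism of the Mycielskian must fix the root w: w has degree |V| and each of its
  neighbours u^t is dominated, away from w, by the non-neighbour u^(t-2); in a twin-free graph
  other than K1 and K2 no copy u^s has both properties.  Fixing w, an automorphism preserves the
  distance spheres around w and hence the level of every copy, except that the copies of the
  (unique) isolated vertex below level t are isolated in the Mycielskian and can be permuted
  freely.  Its action on level 0 is an automorphism of G, and twin-freeness propagates "fixed
  on level s" to level s + 1.  So a determining set of G placed on level 0, together with all
  but one of the t isolated copies, determines the Mycielskian; conversely, projecting a
  determining set of the Mycielskian to G loses at least t - 1 of those isolated copies.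
*)

definition isolated :: "('a \<Rightarrow> 'a \<Rightarrow> bool) \<Rightarrow> 'a \<Rightarrow> bool" where
  "isolated E v \<longleftrightarrow> (\<forall>z. \<not> E v z)"

(* Together with its degree, this singles out the root among the vertices of the Mycielskian. *)
definition neighbours_dominated :: "'a set \<Rightarrow> ('a \<Rightarrow> 'a \<Rightarrow> bool) \<Rightarrow> 'a \<Rightarrow> bool" where
  "neighbours_dominated V E x \<longleftrightarrow>
     (\<forall>y. E x y \<longrightarrow> (\<exists>z\<in>V. z \<noteq> y \<and> z \<noteq> x \<and> \<not> E x z \<and> (\<forall>q. E y q \<and> q \<noteq> x \<longrightarrow> E z q)))"

primrec ball :: "'a set \<Rightarrow> ('a \<Rightarrow> 'a \<Rightarrow> bool) \<Rightarrow> 'a \<Rightarrow> nat \<Rightarrow> 'a set" where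
  "ball V E x 0 = {x}"
| "ball V E x (Suc k) = ball V E x k \<union> {y \<in> V. \<exists>z\<in>ball V E x k. E z y}"

lemma simple_graph_edge_in:
  assumes "simple_graph V E" "E x y"
  shows "x \<in> V" "y \<in> V"
  using assms by (auto simp: simple_graph_def)

lemma simple_graph_sym: "simple_graph V E \<Longrightarrow> E x y \<Longrightarrow> E y x"
  by (simp add: simple_graph_def)

lemma automorphism_image: "automorphism V E f \<Longrightarrow> f ` V = V"
  by (simp add: automorphism_def bij_betw_def)

lemma automorphism_inj_on: "automorphism V E f \<Longrightarrow> inj_on f V"
  by (simp add: automorphism_def bij_betw_def)

lemma automorphism_edge_iff:
  "automorphism V E f \<Longrightarrow> x \<in> V \<Longrightarrow> y \<in> V \<Longrightarrow> E (f x) (f y) \<longleftrightarrow> E x y"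
  by (simp add: automorphism_def)

lemma automorphism_neighbours:
  assumes G: "simple_graph V E" and f: "automorphism V E f" and x: "x \<in> V"
  shows "{y. E (f x) y} = f ` {y. E x y}"
proof (intro set_eqI iffI)
  fix y assume "y \<in> {y. E (f x) y}"
  moreover from this obtain y0 where "y0 \<in> V" "y = f y0"
    using simple_graph_edge_in(2)[OF G] automorphism_image[OF f] by blast
  ultimately show "y \<in> f ` {y. E x y}"
    using automorphism_edge_iff[OF f x] by auto
next
  fix y assume "y \<in> f ` {y. E x y}"
  then show "y \<in> {y. E (f x) y}"
    using automorphism_edge_iff[OF f x] simple_graph_edge_in(2)[OF G] by auto
qed

lemma automorphism_degree:
  assumes G: "simple_graph V E" and f: "automorphism V E f" and x: "x \<in> V"
  shows "card {y. E (f x) y} = card {y. E x y}"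
proof -
  have "inj_on f {y. E x y}"
    using automorphism_inj_on[OF f] simple_graph_edge_in(2)[OF G]
    by (blast intro: inj_on_subset)
  then show ?thesis
    by (simp add: automorphism_neighbours[OF G f x] card_image)
qed

lemma automorphism_isolated:
  assumes G: "simple_graph V E" and f: "automorphism V E f" and x: "x \<in> V"
  shows "isolated E (f x) \<longleftrightarrow> isolated E x"
  using automorphism_neighbours[OF G f x] by (auto simp: isolated_def)

lemma automorphism_neighbours_dominated:
  assumes G: "simple_graph V E" and f: "automorphism V E f" and x: "x \<in> V"
    and dom: "neighbours_dominated V E x"
  shows "neighbours_dominated V E (f x)"
  unfolding neighbours_dominated_def
proof (intro allI impI)
  have fV: "f ` V = V" and inj: "inj_on f V"
    and edge: "\<And>a b. a \<in> V \<Longrightarrow> b \<in> V \<Longrightarrow> E (f a) (f b) \<longleftrightarrow> E a b"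
    using automorphism_image[OF f] automorphism_inj_on[OF f] automorphism_edge_iff[OF f] by auto
  fix y assume "E (f x) y"
  then have "y \<in> f ` {y. E x y}"
    using automorphism_neighbours[OF G f x] by blast
  then obtain y0 where y0: "y0 \<in> V" "y = f y0" "E x y0"
    using simple_graph_edge_in(2)[OF G] by blast
  then obtain z where z: "z \<in> V" "z \<noteq> y0" "z \<noteq> x" "\<not> E x z"
      and zq: "\<And>q. E y0 q \<Longrightarrow> q \<noteq> x \<Longrightarrow> E z q"
    using dom unfolding neighbours_dominated_def by blast
  show "\<exists>z\<in>V. z \<noteq> y \<and> z \<noteq> f x \<and> \<not> E (f x) z \<and> (\<forall>q. E y q \<and> q \<noteq> f x \<longrightarrow> E z q)"
  proof (intro bexI conjI allI impI)
    show "f z \<in> V" "f z \<noteq> y" "f z \<noteq> f x" "\<not> E (f x) (f z)"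
      using z y0 x fV edge inj_onD[OF inj] by blast+
    fix q assume q: "E y q \<and> q \<noteq> f x"
    then obtain q0 where "q0 \<in> V" "q = f q0"
      using simple_graph_edge_in(2)[OF G] fV by blast
    with q y0 z zq x edge show "E (f z) q" by auto
  qed
qed

lemma not_neighbours_dominatedI:
  assumes "E x y" "E y p" "E y q" "p \<noteq> x" "q \<noteq> x"
    and "\<And>z. z \<in> V \<Longrightarrow> z \<noteq> y \<Longrightarrow> z \<noteq> x \<Longrightarrow> E z p \<Longrightarrow> E z q \<Longrightarrow> E x z"
  shows "\<not> neighbours_dominated V E x"
  using assms unfolding neighbours_dominated_def by blast

lemma isolated_unique:
  "twin_free V E \<Longrightarrow> x \<in> V \<Longrightarrow> y \<in> V \<Longrightarrow> isolated E x \<Longrightarrow> isolated E y \<Longrightarrow> x = y"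
  by (simp add: twin_free_def isolated_def)

lemma automorphism_fixes_isolated:
  assumes G: "simple_graph V E" and "twin_free V E" and f: "automorphism V E f"
    and v: "v \<in> V" "isolated E v"
  shows "f v = v"
  using isolated_unique[OF assms(2)] automorphism_isolated[OF G f v(1)] automorphism_image[OF f] v
  by blast

lemma automorphism_transpose_isolated:
  assumes G: "simple_graph V E" and ab: "a \<in> V" "b \<in> V" "isolated E a" "isolated E b"
  shows "automorphism V E (Transposition.transpose a b)"
proof -
  let ?\<tau> = "Transposition.transpose a b"
  have no_edge: "\<not> E x y" "\<not> E y x" if "x \<in> {a, b}" for x y
    using that ab simple_graph_sym[OF G] unfolding isolated_def by blast+
  have ab_iff: "?\<tau> x \<in> {a, b} \<longleftrightarrow> x \<in> {a, b}" for x
    by (auto simp: transpose_def)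
  have "E (?\<tau> x) (?\<tau> y) \<longleftrightarrow> E x y" for x y
  proof (cases "x \<in> {a, b} \<or> y \<in> {a, b}")
    case True
    then show ?thesis
      using no_edge ab_iff by metis
  next
    case False
    then show ?thesis
      by (simp add: transpose_def)
  qed
  then show ?thesis
    using ab by (simp add: automorphism_def)
qed

lemma card_isolated_diff_determining_set:
  assumes G: "simple_graph V E" and S: "determining_set V E S"
    and I: "I \<subseteq> V" "\<And>x. x \<in> I \<Longrightarrow> isolated E x"
  shows "card (I - S) \<le> 1"
proof (rule ccontr)
  have "finite I"
    using G I(1) by (auto simp: simple_graph_def intro: finite_subset)
  moreover assume "\<not> card (I - S) \<le> 1"
  ultimately obtain a b where ab: "a \<in> I - S" "b \<in> I - S" "a \<noteq> b"
    using card_le_Suc0_iff_eq[of "I - S"] by auto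
  then have "automorphism V E (Transposition.transpose a b)"
    using I by (intro automorphism_transpose_isolated[OF G]) auto
  moreover have "\<forall>x\<in>S. Transposition.transpose a b x = x"
    using ab by (metis DiffD2 transpose_apply_other)
  ultimately have "Transposition.transpose a b a = a"
    using S ab I(1) unfolding determining_set_def by blast
  then show False
    using ab by simp
qed

lemma ball_subset: "x \<in> V \<Longrightarrow> ball V E x k \<subseteq> V"
  by (induction k) auto

lemma automorphism_image_ball:
  assumes f: "automorphism V E f" and x: "x \<in> V"
  shows "f ` ball V E x k = ball V E (f x) k"
proof (induction k)
  case (Suc k)
  have "f ` {y \<in> V. \<exists>z\<in>ball V E x k. E z y} = {y \<in> V. \<exists>z\<in>f ` ball V E x k. E z y}"
    using ball_subset[OF x] automorphism_image[OF f] automorphism_edge_iff[OF f]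
    by (auto simp: image_iff subset_iff) (metis imageE)
  then show ?case
    using Suc by (simp add: image_Un)
qed simp

lemma automorphism_image_sphere:
  assumes f: "automorphism V E f" and x: "x \<in> V"
  shows "f ` (ball V E x (Suc k) - ball V E x k) = ball V E (f x) (Suc k) - ball V E (f x) k"
proof -
  have "f ` (ball V E x (Suc k) - ball V E x k) = f ` ball V E x (Suc k) - f ` ball V E x k"
    by (rule inj_on_image_set_diff[OF automorphism_inj_on[OF f]]) (use ball_subset[OF x] in blast)+
  then show ?thesis
    by (simp only: automorphism_image_ball[OF f x])
qed

lemma det_num_le: "determining_set V E S \<Longrightarrow> det_num V E \<le> card S"
  unfolding det_num_def by (rule Least_le) blast

lemma det_num_attained: "\<exists>S. determining_set V E S \<and> card S = det_num V E"
proof -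
  have "determining_set V E V"
    by (simp add: determining_set_def)
  then show ?thesis
    unfolding det_num_def
    using LeastI_ex[of "\<lambda>k. \<exists>S. determining_set V E S \<and> card S = k"] by blast
qed

lemma det_num_le_transfer:
  assumes "\<And>S. determining_set V E S \<Longrightarrow> \<exists>S'. determining_set V' E' S' \<and> card S' + a \<le> card S + b"
  shows "det_num V' E' + a \<le> det_num V E + b"
proof -
  obtain S where "determining_set V E S" "card S = det_num V E"
    using det_num_attained by blast
  with assms det_num_le show ?thesis
    by (metis add_le_mono1 le_trans)
qed

locale mycielskian =
  fixes V :: "'a set" and E :: "'a \<Rightarrow> 'a \<Rightarrow> bool" and t :: nat
  assumes graph: "simple_graph V E" and t_pos: "1 \<le> t"
begin

abbreviation "M \<equiv> myc_V V t"
abbreviation "F \<equiv> myc_E V E t"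

lemma finite_V: "finite V"
  using graph by (simp add: simple_graph_def)

lemmas edge_in = simple_graph_edge_in[OF graph]
lemmas edge_sym = simple_graph_sym[OF graph]

lemma E_irrefl [simp]: "\<not> E a a"
  using graph by (simp add: simple_graph_def)

lemma None_in_myc_V [simp]: "None \<in> M"
  by (simp add: myc_V_def)

lemma Some_in_myc_V [simp]: "Some (a, s) \<in> M \<longleftrightarrow> a \<in> V \<and> s \<le> t"
  by (auto simp: myc_V_def)

lemma myc_E_None_None [simp]: "\<not> F None None"
  by (simp add: myc_E_def)

lemma myc_E_Some_None [simp]: "F (Some (a, s)) None \<longleftrightarrow> a \<in> V \<and> s = t"
  by (auto simp: myc_E_def)

lemma myc_E_None_Some [simp]: "F None (Some (a, s)) \<longleftrightarrow> a \<in> V \<and> s = t"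
  by (auto simp: myc_E_def)

lemma myc_E_Some_Some [simp]:
  "F (Some (a, s)) (Some (b, r)) \<longleftrightarrow>
     s \<le> t \<and> r \<le> t \<and> E a b \<and> (s = 0 \<and> r = 0 \<or> r = s + 1 \<or> s = r + 1)"
  by (auto simp: myc_E_def dest: edge_in)

lemma simple_graph_myc: "simple_graph M F"
proof -
  have "M \<subseteq> insert None (Some ` (V \<times> {..t}))"
    by (auto simp: myc_V_def)
  then have "finite M"
    using finite_V by (auto intro: finite_subset)
  moreover have "F x y \<Longrightarrow> x \<in> M \<and> y \<in> M" for x y
    by (simp add: myc_E_def)
  moreover have "F x y \<Longrightarrow> F y x" for x y
    by (cases x; cases y) (auto dest: edge_sym)
  moreover have "\<not> F x x" for x
    by (cases x) auto
  ultimately show ?thesis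
    unfolding simple_graph_def by blast
qed

lemma neighbours_root: "{y. F None y} = (\<lambda>v. Some (v, t)) ` V"
proof (intro set_eqI iffI)
  show "y \<in> (\<lambda>v. Some (v, t)) ` V" if "y \<in> {y. F None y}" for y
    using that by (cases y) auto
qed auto

lemma card_neighbours_root: "card {y. F None y} = card V"
  by (simp add: neighbours_root card_image inj_on_def)

lemma neighbours_dominated_root: "neighbours_dominated M F None"
  unfolding neighbours_dominated_def
proof (intro allI impI)
  fix y assume "F None y"
  then obtain u where y: "y = Some (u, t)" "u \<in> V"
    by (cases y) auto
  show "\<exists>z\<in>M. z \<noteq> y \<and> z \<noteq> None \<and> \<not> F None z \<and> (\<forall>q. F y q \<and> q \<noteq> None \<longrightarrow> F z q)"
  (* for t = 1 the witness is u^0 by truncated subtraction, still adjacent to every b^0 *)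
  proof (intro bexI[of _ "Some (u, t - 2)"] conjI allI impI)
    fix q assume "F y q \<and> q \<noteq> None"
    with y t_pos show "F (Some (u, t - 2)) q"
      by (cases q) auto
  qed (use y t_pos in auto)
qed

lemma copy_not_neighbours_dominated:
  assumes u: "u \<in> V" "s \<le> t" and path: "E u y" "E y b" "b \<noteq> u"
  shows "\<not> neighbours_dominated M F (Some (u, s))"
proof (cases "s = 0")
  case True
  show ?thesis
  proof (rule not_neighbours_dominatedI[of _ _ "Some (y, 0)" "Some (b, 0)" "Some (u, 1)"])
    fix z assume "z \<in> M" "F z (Some (b, 0))" "F z (Some (u, 1))"
    then show "F (Some (u, s)) z"
      using True t_pos by (cases z) (auto dest: edge_sym)
  qed (use True u path t_pos edge_in edge_sym in auto)
next
  case False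
  show ?thesis
  proof (rule not_neighbours_dominatedI[of _ _ "Some (y, s - 1)" "Some (u, s - 2)" "Some (b, s)"])
    fix z assume "z \<in> M" "F z (Some (u, s - 2))" "F z (Some (b, s))"
    then show "F (Some (u, s)) z"
      using False u by (cases z) (auto dest: edge_sym)
  qed (use False u path edge_in edge_sym in auto)
qed

definition near_root :: "nat \<Rightarrow> ('a \<times> nat) option set" where
  "near_root k = insert None
     {Some (v, s) | v s. v \<in> V \<and> s \<le> t \<and> (s = t \<or> \<not> isolated E v \<and> t < s + k)}"

lemma ball_root_Suc_0: "ball M F None (Suc 0) = near_root (Suc 0)"
proof -
  have "ball M F None (Suc 0) = insert None ((\<lambda>v. Some (v, t)) ` V)"
    using neighbours_root by auto
  also have "\<dots> = near_root (Suc 0)"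
    by (auto simp: near_root_def)
  finally show ?thesis .
qed

lemma near_root_Suc:
  assumes "1 \<le> k"
  shows "near_root (Suc k) = near_root k \<union> {y \<in> M. \<exists>z\<in>near_root k. F z y}"
proof (intro set_eqI iffI)
  fix x assume x: "x \<in> near_root (Suc k)"
  show "x \<in> near_root k \<union> {y \<in> M. \<exists>z\<in>near_root k. F z y}"
  proof (cases "x \<in> near_root k")
    case False
    then obtain v s where vs: "x = Some (v, s)" "v \<in> V" "\<not> isolated E v" "s + k = t"
      using x by (auto simp: near_root_def)
    then obtain b where "E v b"
      by (auto simp: isolated_def)
    then have "Some (b, s + 1) \<in> near_root k" "F (Some (b, s + 1)) x" "x \<in> M"
      using vs assms by (auto simp: near_root_def isolated_def dest: edge_in edge_sym)
    then show ?thesis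
      by blast
  qed simp
next
  fix x assume x: "x \<in> near_root k \<union> {y \<in> M. \<exists>z\<in>near_root k. F z y}"
  show "x \<in> near_root (Suc k)"
  proof (cases "x \<in> near_root k")
    case False
    then obtain z where z: "z \<in> near_root k" "F z x" "x \<in> M"
      using x by blast
    show ?thesis
    proof (cases x)
      case (Some p)
      then obtain b r where b: "x = Some (b, r)"
        by (cases p) auto
      show ?thesis
      proof (cases z)
        case (Some q)
        with z b assms show ?thesis
          by (cases q) (auto simp: near_root_def isolated_def dest: edge_in edge_sym)
      qed (use z b in \<open>auto simp: near_root_def\<close>)
    qed (simp add: near_root_def)
  qed (auto simp: near_root_def)
qed

lemma ball_root: "1 \<le> k \<Longrightarrow> ball M F None k = near_root k"
proof (induction k rule: nat_induct_at_least)
  case (Suc k)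
  then show ?case
    using near_root_Suc[of k] by simp
qed (simp only: One_nat_def ball_root_Suc_0)

lemma sphere_root:
  assumes "k \<le> t"
  shows "ball M F None (Suc k) - ball M F None k =
    {Some (v, t - k) | v. v \<in> V \<and> (k = 0 \<or> \<not> isolated E v)}"
proof (cases "k = 0")
  case True
  show ?thesis
    unfolding True ball_root_Suc_0 using t_pos by (auto simp: near_root_def)
next
  case False
  have "ball M F None (Suc k) = near_root (Suc k)"
    by (rule ball_root) simp
  moreover have "ball M F None k = near_root k"
    by (rule ball_root) (use False in simp)
  ultimately show ?thesis
    using assms False by (auto simp: near_root_def)
qed

lemma automorphism_preserves_level:
  assumes f: "automorphism M F f" and root: "f None = None"
    and u: "u \<in> V" "r \<le> t" "r = t \<or> \<not> isolated E u"
  shows "\<exists>y\<in>V. f (Some (u, r)) = Some (y, r)"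
proof -
  define k where "k = t - r"
  define L where "L = {Some (v, t - k) | v. v \<in> V \<and> (k = 0 \<or> \<not> isolated E v)}"
  have "f ` L = L"
    using automorphism_image_sphere[OF f None_in_myc_V, of k] sphere_root[of k]
    unfolding root L_def k_def by simp
  moreover have "Some (u, r) \<in> L"
    using u by (auto simp: L_def k_def)
  ultimately show ?thesis
    using u by (auto simp: L_def k_def)
qed

definition lift :: "('a \<Rightarrow> 'a) \<Rightarrow> ('a \<times> nat) option \<Rightarrow> ('a \<times> nat) option" where
  "lift \<sigma> = map_option (apfst \<sigma>)"

lemma lift_simps [simp]:
  "lift \<sigma> None = None"
  "lift \<sigma> (Some (v, s)) = Some (\<sigma> v, s)"
  by (simp_all add: lift_def)

lemma automorphism_lift:
  assumes \<sigma>: "automorphism V E \<sigma>"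
  shows "automorphism M F (lift \<sigma>)"
proof -
  have \<sigma>V: "\<sigma> ` V = V" and inj: "inj_on \<sigma> V"
    and edge: "\<And>a b. a \<in> V \<Longrightarrow> b \<in> V \<Longrightarrow> E (\<sigma> a) (\<sigma> b) \<longleftrightarrow> E a b"
    using automorphism_image[OF \<sigma>] automorphism_inj_on[OF \<sigma>] automorphism_edge_iff[OF \<sigma>] by auto
  have "inj_on (lift \<sigma>) M"
  proof (rule inj_onI)
    fix x y assume "x \<in> M" "y \<in> M" "lift \<sigma> x = lift \<sigma> y"
    then show "x = y"
      using inj_onD[OF inj] by (cases x; cases y) auto
  qed
  moreover have "lift \<sigma> ` M = M"
  proof (intro set_eqI iffI)
    fix y assume "y \<in> M"
    then show "y \<in> lift \<sigma> ` M"
    proof (cases y)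
      case (Some p)
      with \<open>y \<in> M\<close> \<sigma>V obtain a s where "y = Some (\<sigma> a, s)" "a \<in> V" "s \<le> t"
        by (cases p) auto
      then show ?thesis
        by (metis Some_in_myc_V image_eqI lift_simps(2))
    qed (metis None_in_myc_V image_eqI lift_simps(1))
  next
    fix y assume "y \<in> lift \<sigma> ` M"
    then show "y \<in> M"
      using \<sigma>V by (auto simp: myc_V_def)
  qed
  moreover have "F (lift \<sigma> x) (lift \<sigma> y) \<longleftrightarrow> F x y" if "x \<in> M" "y \<in> M" for x y
    using that edge \<sigma>V by (cases x; cases y) auto
  ultimately show ?thesis
    by (simp add: automorphism_def bij_betw_def)
qed

lemma automorphism_level_0:
  assumes f: "automorphism M F f" and \<sigma>: "\<And>u. u \<in> V \<Longrightarrow> f (Some (u, 0)) = Some (\<sigma> u, 0)"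
  shows "automorphism V E \<sigma>"
proof -
  have copy: "Some (u, 0) \<in> M" if "u \<in> V" for u
    using that by simp
  have "\<sigma> u \<in> V" if "u \<in> V" for u
  proof -
    have "Some (\<sigma> u, 0) \<in> M"
      using automorphism_image[OF f] copy[OF that] \<sigma>[OF that] by (metis imageI)
    then show ?thesis
      by simp
  qed
  then have "\<sigma> ` V \<subseteq> V"
    by blast
  moreover have "inj_on \<sigma> V"
    using inj_onD[OF automorphism_inj_on[OF f] _ copy copy] \<sigma> by (auto intro: inj_onI)
  moreover have "E (\<sigma> u) (\<sigma> v) \<longleftrightarrow> E u v" if "u \<in> V" "v \<in> V" for u v
    using automorphism_edge_iff[OF f copy copy, OF that] \<sigma> that by simp
  ultimately show ?thesis
    using endo_inj_surj[OF finite_V] by (simp add: automorphism_def bij_betw_def)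
qed

lemma isolated_copy_iff:
  assumes "v \<in> V" "s \<le> t"
  shows "isolated F (Some (v, s)) \<longleftrightarrow> isolated E v \<and> s < t"
proof
  assume iso: "isolated F (Some (v, s))"
  have "\<not> E v b" for b
  proof
    assume "E v b"
    then have "F (Some (v, s)) (Some (b, s + 1)) \<or> F (Some (v, s)) (Some (b, s - 1))"
      using assms t_pos by (cases "s < t") auto
    with iso show False
      unfolding isolated_def by blast
  qed
  moreover have "s \<noteq> t"
  proof
    assume "s = t"
    then have "F (Some (v, s)) None"
      using assms by simp
    with iso show False
      unfolding isolated_def by blast
  qed
  ultimately show "isolated E v \<and> s < t"
    using assms by (simp add: isolated_def)
next
  assume "isolated E v \<and> s < t"
  then show "isolated F (Some (v, s))"
    unfolding isolated_def by (metis myc_E_Some_None myc_E_Some_Some nat_less_le not_None_eq surj_pair)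
qed

lemma neighbours_isolated_top:
  assumes "v \<in> V" "isolated E v"
  shows "{y. F (Some (v, t)) y} = {None}"
proof (intro set_eqI iffI)
  show "y \<in> {None}" if "y \<in> {y. F (Some (v, t)) y}" for y
    using that assms by (cases y) (auto simp: isolated_def)
qed (use assms in simp)

lemma card_neighbours_isolated_copy:
  assumes "isolated E u"
  shows "card {y. F (Some (u, s)) y} \<le> 1"
proof -
  have "{y. F (Some (u, s)) y} \<subseteq> {None}"
  proof
    fix y assume "y \<in> {y. F (Some (u, s)) y}"
    then show "y \<in> {None}"
      using assms by (cases y) (auto simp: isolated_def)
  qed
  then show ?thesis
    using card_mono[of "{None}"] by simp
qed

definition isolated_copies :: "nat \<Rightarrow> ('a \<times> nat) option set" where
  "isolated_copies k = {Some (v, s) | v s. v \<in> V \<and> isolated E v \<and> s < k}"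

end

locale twin_free_mycielskian = mycielskian +
  assumes twin_free: "twin_free V E"
begin

lemma twin_eq: "a \<in> V \<Longrightarrow> b \<in> V \<Longrightarrow> (\<And>z. E a z \<longleftrightarrow> E b z) \<Longrightarrow> a = b"
  using twin_free unfolding twin_free_def by blast

lemma card_neighbours_pendant_copy:
  assumes y: "E u y" and pendant: "\<And>y b. E u y \<Longrightarrow> E y b \<Longrightarrow> b = u"
  shows "card {q. F (Some (u, s)) q} \<le> 2"
proof -
  have neighbours_u: "E w z \<longleftrightarrow> z = u" if "E u w" for w z
    using pendant[OF that] edge_sym[OF that] by blast
  have only_y: "y' = y" if "E u y'" for y'
  proof (rule twin_eq)
    show "E y' z \<longleftrightarrow> E y z" for z
      using neighbours_u[OF that] neighbours_u[OF y] by simp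
  qed (use edge_in(2)[OF that] edge_in(2)[OF y] in auto)
  let ?N = "{Some (y, s - 1), if s = t then None else Some (y, s + 1)}"
  have "{q. F (Some (u, s)) q} \<subseteq> ?N"
  proof
    fix q assume "q \<in> {q. F (Some (u, s)) q}"
    then show "q \<in> ?N"
      by (cases q) (auto dest: only_y)
  qed
  then have "card {q. F (Some (u, s)) q} \<le> card ?N"
    by (intro card_mono) auto
  also have "\<dots> \<le> 2"
    by (simp add: card_insert_if)
  finally show ?thesis .
qed

lemma card_isolated_copies:
  "card (isolated_copies k) = (if has_isolated_vertex V E then k else 0)"
proof (cases "has_isolated_vertex V E")
  case True
  then obtain v0 where v0: "v0 \<in> V" "isolated E v0"
    by (auto simp: has_isolated_vertex_def isolated_def)
  then have "isolated_copies k = (\<lambda>s. Some (v0, s)) ` {..<k}"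
    using isolated_unique[OF twin_free] by (auto simp: isolated_copies_def)
  then show ?thesis
    using True by (simp add: card_image inj_on_def)
next
  case False
  then have "isolated_copies k = {}"
    by (auto simp: isolated_copies_def has_isolated_vertex_def isolated_def)
  then show ?thesis
    using False by simp
qed

lemma automorphism_level_step:
  assumes f: "automorphism M F f" and fixed: "\<forall>z\<in>V. f (Some (z, s)) = Some (z, s)"
    and u: "u \<in> V" "Suc s \<le> t" and y: "y \<in> V" "f (Some (u, Suc s)) = Some (y, Suc s)"
  shows "y = u"
proof (rule twin_eq[OF y(1) u(1)])
  fix z
  show "E y z \<longleftrightarrow> E u z"
  proof (cases "z \<in> V")
    case True
    have copies: "Some (u, Suc s) \<in> M" "Some (z, s) \<in> M"
      using True u by auto
    have "E y z \<longleftrightarrow> F (f (Some (u, Suc s))) (f (Some (z, s)))"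
      using y fixed True u by simp
    also have "\<dots> \<longleftrightarrow> E u z"
      using automorphism_edge_iff[OF f copies] u by simp
    finally show ?thesis .
  qed (use edge_in in blast)
qed

lemma determining_set_project:
  assumes S': "determining_set M F S'"
  shows "determining_set V E {v. \<exists>s. Some (v, s) \<in> S' - isolated_copies t}"
    (is "determining_set V E ?S")
  unfolding determining_set_def
proof (intro conjI allI impI)
  show "?S \<subseteq> V"
    using S' by (auto simp: determining_set_def)
  fix \<sigma> assume \<sigma>: "automorphism V E \<sigma> \<and> (\<forall>x\<in>?S. \<sigma> x = x)"
  have "lift \<sigma> x = x" if "x \<in> S'" for x
  proof (cases x)
    case (Some p)
    then obtain a s where x: "x = Some (a, s)"
      by (cases p) auto
    show ?thesis
    proof (cases "x \<in> isolated_copies t")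
      case True
      then have "a \<in> V" "isolated E a"
        by (auto simp: x isolated_copies_def)
      then show ?thesis
        using automorphism_fixes_isolated[OF graph twin_free] \<sigma> x by simp
    next
      case False
      then show ?thesis
        using \<sigma> that x by auto
    qed
  qed simp
  then have lift_id: "\<forall>x\<in>M. lift \<sigma> x = x"
    using S' automorphism_lift \<sigma> by (auto simp: determining_set_def)
  show "\<forall>v\<in>V. \<sigma> v = v"
    using lift_id[rule_format, of "Some (_, 0)"] by simp
qed

lemma ex_determining_set_project:
  assumes S': "determining_set M F S'"
  shows "\<exists>S. determining_set V E S \<and> card S + (card (isolated_copies t) - 1) \<le> card S'"
proof -
  let ?I = "isolated_copies t"
  let ?S = "{v. \<exists>s. Some (v, s) \<in> S' - ?I}"
  have IM: "?I \<subseteq> M"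
    by (auto simp: isolated_copies_def)
  have fin: "finite S'" "finite ?I"
    using S' IM simple_graph_myc by (auto simp: simple_graph_def determining_set_def intro: finite_subset)
  have "card (?I - S') \<le> 1"
    by (rule card_isolated_diff_determining_set[OF simple_graph_myc S' IM])
      (auto simp: isolated_copies_def isolated_copy_iff)
  moreover have "card ?I = card (?I \<inter> S') + card (?I - S')"
    using fin by (simp add: card_Int_Diff)
  moreover have "?S \<subseteq> (\<lambda>x. fst (the x)) ` (S' - ?I)"
    by force
  then have "card ?S \<le> card (S' - ?I)"
    using fin by (meson card_image_le card_mono finite_Diff finite_imageI le_trans)
  moreover have "card (S' - ?I) = card S' - card (S' \<inter> ?I)" "card (S' \<inter> ?I) \<le> card S'"
    using fin by (simp_all add: card_Diff_subset_Int card_mono)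
  ultimately have "card ?S + (card ?I - 1) \<le> card S'"
    by (simp add: Int_commute)
  with determining_set_project[OF S'] show ?thesis
    by blast
qed

end

locale proper_twin_free_mycielskian = twin_free_mycielskian +
  assumes not_K1: "\<not> (\<exists>a. V = {a})"
    and not_K2: "\<not> (\<exists>a b. a \<noteq> b \<and> V = {a, b} \<and> E a b)"
begin

lemma card_neighbours_copy_less:
  assumes u: "u \<in> V" "s \<le> t" and pendant: "\<And>y b. E u y \<Longrightarrow> E y b \<Longrightarrow> b = u"
  shows "card {y. F (Some (u, s)) y} < card V"
proof (cases "isolated E u")
  case True
  obtain v where "v \<in> V" "v \<noteq> u"
    using not_K1 u by blast
  then have "2 \<le> card V"
    using card_mono[OF finite_V, of "{u, v}"] u by simp
  then show ?thesis
    using card_neighbours_isolated_copy[OF True, of s] by linarith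
next
  case False
  then obtain y where y: "E u y"
    by (auto simp: isolated_def)
  then have "u \<noteq> y" "{u, y} \<subseteq> V"
    using u edge_in(2)[OF y] by auto
  then have "{u, y} \<subset> V"
    using not_K2 y by blast
  then have "card {u, y} < card V"
    by (rule psubset_card_mono[OF finite_V])
  moreover have "card {q. F (Some (u, s)) q} \<le> 2"
    using card_neighbours_pendant_copy[OF y] pendant by blast
  ultimately show ?thesis
    using \<open>u \<noteq> y\<close> by simp
qed

lemma automorphism_fixes_root:
  assumes f: "automorphism M F f"
  shows "f None = None"
proof (rule ccontr)
  assume "f None \<noteq> None"
  then obtain u s where us: "f None = Some (u, s)"
    by (metis not_None_eq surj_pair)
  have "f None \<in> M"
    using automorphism_image[OF f] None_in_myc_V by blast
  then have u: "u \<in> V" "s \<le> t"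
    using us by auto
  have "card {y. F (Some (u, s)) y} = card V"
    using automorphism_degree[OF simple_graph_myc f None_in_myc_V] card_neighbours_root us by simp
  moreover have "neighbours_dominated M F (Some (u, s))"
    using automorphism_neighbours_dominated[OF simple_graph_myc f None_in_myc_V]
      neighbours_dominated_root us by simp
  ultimately show False
  proof (cases "\<exists>y b. E u y \<and> E y b \<and> b \<noteq> u")
    case False
    then have "card {y. F (Some (u, s)) y} < card V"
      by (intro card_neighbours_copy_less[OF u]) blast
    with \<open>card {y. F (Some (u, s)) y} = card V\<close> show False
      by simp
  qed (use copy_not_neighbours_dominated[OF u] in blast)
qed

(* f permutes the isolated vertices v^r, r < t, of the Mycielskian and fixes all but v^(t-1) *)
lemma automorphism_fixes_isolated_copy_below_top:
  assumes f: "automorphism M F f" and fixed: "\<forall>x\<in>isolated_copies (t - 1). f x = x"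
    and v: "v \<in> V" "isolated E v" and r: "r < t"
  shows "f (Some (v, r)) = Some (v, r)"
proof (cases "r < t - 1")
  case True
  then show ?thesis
    using fixed v by (auto simp: isolated_copies_def)
next
  case False
  have inj: "inj_on f M" and fM: "f ` M = M"
    using automorphism_inj_on[OF f] automorphism_image[OF f] by auto
  define x where "x = Some (v, r)"
  have x: "x \<in> M" "isolated F x"
    using v r isolated_copy_iff by (auto simp: x_def)
  have "f x \<noteq> None"
  proof
    assume "f x = None"
    then have "x = None"
      using inj_onD[OF inj _ x(1) None_in_myc_V] automorphism_fixes_root[OF f] by simp
    then show False
      by (simp add: x_def)
  qed
  moreover have "f x \<in> M"
    using x fM by blast
  ultimately obtain a r' where fx: "f x = Some (a, r')" "a \<in> V" "r' \<le> t"
    by (metis Some_in_myc_V not_None_eq surj_pair)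
  then have "isolated E a" "r' < t"
    using automorphism_isolated[OF simple_graph_myc f x(1)] x(2) isolated_copy_iff by auto
  then have "a = v"
    using isolated_unique[OF twin_free] v fx by blast
  have "\<not> r' < t - 1"
  proof
    assume "r' < t - 1"
    then have "f (Some (v, r')) = f x"
      using fixed v fx \<open>a = v\<close> by (auto simp: isolated_copies_def)
    then have "r' = r"
      using inj_onD[OF inj] x(1) v \<open>r' \<le> t\<close> by (fastforce simp: x_def)
    with False \<open>r' < t - 1\<close> show False
      by simp
  qed
  then show ?thesis
    using fx \<open>a = v\<close> \<open>r' < t\<close> False r by (simp add: x_def)
qed

lemma automorphism_fixes_isolated_copy_top:
  assumes f: "automorphism M F f" and v: "v \<in> V" "isolated E v"
  shows "f (Some (v, t)) = Some (v, t)"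
proof -
  have root: "f None = None"
    using automorphism_fixes_root[OF f] .
  obtain y where y: "y \<in> V" "f (Some (v, t)) = Some (y, t)"
    using automorphism_preserves_level[OF f root v(1)] by blast
  have neighbours_y: "{z. F (Some (y, t)) z} = {None}"
    using automorphism_neighbours[OF simple_graph_myc f, of "Some (v, t)"]
      neighbours_isolated_top[OF v] root v y by simp
  have "isolated E y"
    unfolding isolated_def
  proof (intro allI notI)
    fix b assume "E y b"
    then have "Some (b, t - 1) \<in> {z. F (Some (y, t)) z}"
      using t_pos by auto
    with neighbours_y show False
      by simp
  qed
  then show ?thesis
    using isolated_unique[OF twin_free] y v by blast
qed

lemma automorphism_fixes_isolated_copies:
  assumes f: "automorphism M F f" and fixed: "\<forall>x\<in>isolated_copies (t - 1). f x = x"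
    and v: "v \<in> V" "isolated E v" and s: "s \<le> t"
  shows "f (Some (v, s)) = Some (v, s)"
  using automorphism_fixes_isolated_copy_below_top[OF f fixed v]
    automorphism_fixes_isolated_copy_top[OF f v] s by (cases "s < t") auto

lemma automorphism_eq_id:
  assumes f: "automorphism M F f" and S: "determining_set V E S"
    and fixed_S: "\<forall>v\<in>S. f (Some (v, 0)) = Some (v, 0)"
    and fixed_isolated: "\<forall>x\<in>isolated_copies (t - 1). f x = x"
  shows "\<forall>x\<in>M. f x = x"
proof -
  have root: "f None = None"
    using automorphism_fixes_root[OF f] .
  have level: "\<exists>y\<in>V. f (Some (u, s)) = Some (y, s)" if "u \<in> V" "s \<le> t" for u s
    using automorphism_preserves_level[OF f root that]
      automorphism_fixes_isolated_copies[OF f fixed_isolated that(1) _ that(2)] that(1)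
    by blast
  obtain \<sigma> where \<sigma>: "\<forall>u\<in>V. f (Some (u, 0)) = Some (\<sigma> u, 0)"
    using level[of _ 0] by (metis bot_nat_0.extremum)
  have "automorphism V E \<sigma>"
    using automorphism_level_0[OF f] \<sigma> by blast
  moreover have "\<forall>v\<in>S. \<sigma> v = v"
    using \<sigma> fixed_S S by (fastforce simp: determining_set_def)
  ultimately have \<sigma>_id: "\<forall>u\<in>V. \<sigma> u = u"
    using S by (auto simp: determining_set_def)
  have "\<forall>u\<in>V. f (Some (u, s)) = Some (u, s)" if "s \<le> t" for s
    using that
  proof (induction s)
    case 0
    then show ?case
      using \<sigma> \<sigma>_id by simp
  next
    case (Suc s)
    show ?case
    proof
      fix u assume u: "u \<in> V"
      obtain y where "y \<in> V" "f (Some (u, Suc s)) = Some (y, Suc s)"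
        using level[OF u Suc.prems] by blast
      moreover from this have "y = u"
        using automorphism_level_step[OF f _ u Suc.prems] Suc by simp
      ultimately show "f (Some (u, Suc s)) = Some (u, Suc s)"
        by simp
    qed
  qed
  then show ?thesis
    using root by (auto simp: myc_V_def)
qed

lemma ex_determining_set_lift:
  assumes S: "determining_set V E S"
  shows "\<exists>S'. determining_set M F S' \<and> card S' \<le> card S + card (isolated_copies (t - 1))"
proof -
  define S' where "S' = (\<lambda>v. Some (v, 0)) ` S \<union> isolated_copies (t - 1)"
  have "S \<subseteq> V"
    using S by (simp add: determining_set_def)
  then have "S' \<subseteq> M" and "finite S"
    using finite_V by (auto simp: S'_def isolated_copies_def intro: finite_subset)
  then have "determining_set M F S'"
    unfolding determining_set_def S'_def using automorphism_eq_id[OF _ S] by blast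
  moreover have "card S' \<le> card S + card (isolated_copies (t - 1))"
    unfolding S'_def using card_Un_le card_image_le[OF \<open>finite S\<close>] by (metis add_le_mono1 le_trans)
  ultimately show ?thesis
    by blast
qed

end

theorem mainTheorem3:
  fixes V :: "'a set" and E :: "'a \<Rightarrow> 'a \<Rightarrow> bool" and t :: nat
  assumes "simple_graph V E"
    and "twin_free V E"
    and "\<not> (\<exists>a. V = {a})"
    and "\<not> (\<exists>a b. a \<noteq> b \<and> V = {a, b} \<and> E a b)"
    and "t \<ge> 1"
  shows "det_num (myc_V V t) (myc_E V E t) =
           (if has_isolated_vertex V E then det_num V E + t - 1 else det_num V E)"
proof -
  interpret proper_twin_free_mycielskian V E t
    using assms by unfold_locales
  define c where "c = (if has_isolated_vertex V E then t - 1 else 0)"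
  have c: "c = card (isolated_copies (t - 1))" "c = card (isolated_copies t) - 1"
    by (simp_all add: card_isolated_copies c_def)
  have "det_num M F + 0 \<le> det_num V E + c"
    by (rule det_num_le_transfer) (use ex_determining_set_lift c(1) in simp)
  moreover have "det_num V E + c \<le> det_num M F + 0"
    by (rule det_num_le_transfer) (use ex_determining_set_project c(2) in simp)
  ultimately show ?thesis
    using assms(5) by (cases "has_isolated_vertex V E") (simp_all add: c_def)
qed

end
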